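(* Consider the Distributed Guided Local Search (DGLS) algorithm described in the context, run with an evaporation rate $0<\gamma<1$, with either manner (additive or multiplicative) and any update scope (cell, table, row or column). Then at every round, every entry of every cost modifier $M_{ij}$ maintained by any agent is bounded above by $1/(1-\gamma)$.
   Context: A (binary) Distributed Constraint Optimization Problem (DCOP) consists of agents $1,\dots,n$, each controlling one variable $x_i$ with finite domain $D_i$, and binary constraint functions $f_{ij}:D_i\times D_j\to\mathbb{R}_{\ge0}$ with $f_{ji}=f_{ij}^T$; $\mathcal{N}_i$ is the set of neighbors of $i$ (agents sharing a constraint with $i$). Write $\check f_{ij}=\min_{d_i,d_j} f_{ij}(d_i,d_j)$, $\hat f_{ij}=\max_{d_i,d_j} f_{ij}(d_i,d_j)$. DGLS (Distributed Guided Local Search) is parameterized by a manner (additive $A$ or multiplicative $M$), an evaporation rate $\gamma$, and a scope ($cel$, $tab$, $row$, $col$). Each agent $i$ keeps, for each $j\in\mathcal{N}_i$, a cost modifier $M_{ij}$ (a $|D_i|\times|D_j|$ real matrix), initialized to $0$. The effective cost is $\mathrm{EffCost}(d_i,j,d_j)=f_{ij}(d_i,d_j)+M_{ij}(d_i,d_j)$ (additive) or $f_{ij}(d_i,d_j)\cdot[1+M_{ij}(d_i,d_j)]$ (multiplicative). Initially each agent picks a random value $d_i\in D_i$ and sends it to its neighbors. Rounds are synchronous; in each round agent $i$: (1) sets $\bar P_i=\emptyset$ and receives the neighbors' current values $d_j$; (2) computes $d_i^*\in\arg\min_{d\in D_i}\sum_{j\in\mathcal{N}_i}\mathrm{EffCost}(d,j,d_j)$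 and gain $\Delta_i=\sum_{j}[\mathrm{EffCost}(d_i,j,d_j)-\mathrm{EffCost}(d_i^*,j,d_j)]$, and exchanges gains with neighbors; (3) if $\Delta_i>0$ and $\Delta_i$ is the best improvement among itself and its neighbors, it sets $d_i\gets d_i^*$; otherwise, if no neighbor can improve (all neighbors' gains are $\le 0$), then for each $j\in\mathcal{N}_i$ it declares $f_{ij}$ violated with probability $\eta=\frac{f_{ij}(d_i,d_j)-\check f_{ij}}{\hat f_{ij}-\check f_{ij}}$, and for each violated one adds $j$ to $\bar P_i$ and sends a SYNC message to $j$; (4) lets $\tilde P_i$ be the set of neighbors from which it received SYNC this round; (5) for each $j\in\mathcal{N}_i$: first evaporates, $M_{ij}\gets\gamma M_{ij}$ entrywise, then updates with current values $d_i,d_j$: scope $cel$: if $j\in\bar P_i\cup\tilde P_i$, $M_{ij}(d_i,d_j)\mathrel{+}=1$; scope $tab$: if $j\in\bar P_i\cup\tilde P_i$, all entries of $M_{ij}$ are increased by 1; scope $row$: if $j\in\bar P_i$, $M_{ij}(d_i,d_j')\mathrel{+}=1$ for all $d_j'$; if $j\in\tilde P_i$, $M_{ij}(d_i',d_j)\mathrel{+}=1$ for all $d_i'$; if $j\in\bar P_i\cap\tilde P_i$, $M_{ij}(d_i,d_j)\mathrel{-}=1$; scope $col$: same as $row$ with the roles of the two updates exchanged (if $j\in\bar P_i$ increment column $d_j$, if $j\in\tilde P_i$ increment row $d_i$, and subtract 1 at $(d_i,d_j)$ if both); (6) sends its value $d_i$ to its neighbors. *)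

theory Defs
  imports Complex_Main
begin

datatype manner = Additive | Multiplicative
datatype scope = Cel | Tab | Row | Col

definition dcop :: "('a::finite \<Rightarrow> 'v set) \<Rightarrow> ('a \<Rightarrow> 'a set) \<Rightarrow> ('a \<Rightarrow> 'a \<Rightarrow> 'v \<Rightarrow> 'v \<Rightarrow> real) \<Rightarrow> bool" where
  "dcop D N f \<longleftrightarrow>
     (\<forall>i. finite (D i) \<and> D i \<noteq> {}) \<and>
     (\<forall>i. i \<notin> N i) \<and> (\<forall>i j. j \<in> N i \<longleftrightarrow> i \<in> N j) \<and>
     (\<forall>i j a b. f i j a b \<ge> 0) \<and>
     (\<forall>i j a b. f j i b a = f i j a b)"

text \<open>Cost modifiers: M i j is the matrix kept by agent i for neighbour j.\<close>
type_synonym ('a, 'v) cmod = "'a \<Rightarrow> 'a \<Rightarrow> 'v \<Rightarrow> 'v \<Rightarrow> real"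

definition effcost :: "manner \<Rightarrow> ('a \<Rightarrow> 'a \<Rightarrow> 'v \<Rightarrow> 'v \<Rightarrow> real) \<Rightarrow> ('a, 'v) cmod
    \<Rightarrow> 'a \<Rightarrow> 'v \<Rightarrow> 'a \<Rightarrow> 'v \<Rightarrow> real" where
  "effcost mn f M i di j dj =
     (case mn of Additive \<Rightarrow> f i j di dj + M i j di dj
               | Multiplicative \<Rightarrow> f i j di dj * (1 + M i j di dj))"

definition localcost :: "manner \<Rightarrow> ('a \<Rightarrow> 'a set) \<Rightarrow> ('a \<Rightarrow> 'a \<Rightarrow> 'v \<Rightarrow> 'v \<Rightarrow> real)
    \<Rightarrow> ('a, 'v) cmod \<Rightarrow> ('a \<Rightarrow> 'v) \<Rightarrow> 'a \<Rightarrow> 'v \<Rightarrow> real" where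
  "localcost mn N f M x i d = (\<Sum>j\<in>N i. effcost mn f M i d j (x j))"

definition gain :: "('a \<Rightarrow> 'v set) \<Rightarrow> manner \<Rightarrow> ('a \<Rightarrow> 'a set) \<Rightarrow> ('a \<Rightarrow> 'a \<Rightarrow> 'v \<Rightarrow> 'v \<Rightarrow> real)
    \<Rightarrow> ('a, 'v) cmod \<Rightarrow> ('a \<Rightarrow> 'v) \<Rightarrow> 'a \<Rightarrow> real" where
  "gain D mn N f M x i =
     localcost mn N f M x i (x i) - Min (localcost mn N f M x i ` D i)"

definition fmin :: "('a \<Rightarrow> 'v set) \<Rightarrow> ('a \<Rightarrow> 'a \<Rightarrow> 'v \<Rightarrow> 'v \<Rightarrow> real) \<Rightarrow> 'a \<Rightarrow> 'a \<Rightarrow> real" where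
  "fmin D f i j = Min {f i j a b | a b. a \<in> D i \<and> b \<in> D j}"

definition fmax :: "('a \<Rightarrow> 'v set) \<Rightarrow> ('a \<Rightarrow> 'a \<Rightarrow> 'v \<Rightarrow> 'v \<Rightarrow> real) \<Rightarrow> 'a \<Rightarrow> 'a \<Rightarrow> real" where
  "fmax D f i j = Max {f i j a b | a b. a \<in> D i \<and> b \<in> D j}"

text \<open>Violation probability eta (division by zero yields 0 in HOL).\<close>
definition eta :: "('a \<Rightarrow> 'v set) \<Rightarrow> ('a \<Rightarrow> 'a \<Rightarrow> 'v \<Rightarrow> 'v \<Rightarrow> real) \<Rightarrow> 'a \<Rightarrow> 'a \<Rightarrow> 'v \<Rightarrow> 'v \<Rightarrow> real" where
  "eta D f i j a b = (f i j a b - fmin D f i j) / (fmax D f i j - fmin D f i j)"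

text \<open>Increment added (after evaporation) to entry (a,b) of M_ij, given whether
  j is in Pbar_i (pb), in Ptilde_i (pt), and the current values di, dj.\<close>
definition incr :: "scope \<Rightarrow> bool \<Rightarrow> bool \<Rightarrow> 'v \<Rightarrow> 'v \<Rightarrow> 'v \<Rightarrow> 'v \<Rightarrow> real" where
  "incr sc pb pt di dj a b =
     (case sc of
        Cel \<Rightarrow> (if (pb \<or> pt) \<and> a = di \<and> b = dj then 1 else 0)
      | Tab \<Rightarrow> (if pb \<or> pt then 1 else 0)
      | Row \<Rightarrow> (if pb \<and> a = di then 1 else 0) + (if pt \<and> b = dj then 1 else 0)
               - (if pb \<and> pt \<and> a = di \<and> b = dj then 1 else 0)
      | Col \<Rightarrow> (if pb \<and> b = dj then 1 else 0) + (if pt \<and> a = di then 1 else 0)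
               - (if pb \<and> pt \<and> a = di \<and> b = dj then 1 else 0))"

text \<open>Randomness and tie-breaking are modelled
  nondeterministically: dstar is any argmin; mv (the set of agents that move) is
  any set compatible with the rule; V i j (agent i declares f_ij violated) may
  hold only with positive probability and must hold if the probability is 1.\<close>
definition dgls_step :: "('a::finite \<Rightarrow> 'v set) \<Rightarrow> ('a \<Rightarrow> 'a set) \<Rightarrow> ('a \<Rightarrow> 'a \<Rightarrow> 'v \<Rightarrow> 'v \<Rightarrow> real)
    \<Rightarrow> manner \<Rightarrow> real \<Rightarrow> scope
    \<Rightarrow> ('a \<Rightarrow> 'v) \<times> ('a, 'v) cmod \<Rightarrow> ('a \<Rightarrow> 'v) \<times> ('a, 'v) cmod \<Rightarrow> bool" where
  "dgls_step D N f mn \<gamma> sc s s' \<longleftrightarrow>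
    (let x = fst s; M = snd s; x' = fst s'; M' = snd s';
         lc = localcost mn N f M x; \<Delta> = gain D mn N f M x
     in \<exists>dstar mv V.
       (\<forall>i. dstar i \<in> D i \<and> (\<forall>d\<in>D i. lc i (dstar i) \<le> lc i d)) \<and>
       (\<forall>i. mv i \<longrightarrow> \<Delta> i > 0 \<and> (\<forall>j\<in>N i. \<Delta> j \<le> \<Delta> i)) \<and>
       (\<forall>i. \<Delta> i > 0 \<and> (\<forall>j\<in>N i. \<Delta> j < \<Delta> i) \<longrightarrow> mv i) \<and>
       (\<forall>i. x' i = (if mv i then dstar i else x i)) \<and>
       (\<forall>i j. V i j \<longrightarrow> j \<in> N i \<and> \<not> mv i \<and> (\<forall>k\<in>N i. \<Delta> k \<le> 0)
                        \<and> eta D f i j (x i) (x j) > 0) \<and>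
       (\<forall>i j. j \<in> N i \<and> \<not> mv i \<and> (\<forall>k\<in>N i. \<Delta> k \<le> 0)
                \<and> eta D f i j (x i) (x j) \<ge> 1 \<longrightarrow> V i j) \<and>
       (\<forall>i j. M' i j = (if j \<in> N i
                        then (\<lambda>a b. \<gamma> * M i j a b + incr sc (V i j) (V j i) (x' i) (x j) a b)
                        else M i j)))"

inductive dgls_reach :: "('a::finite \<Rightarrow> 'v set) \<Rightarrow> ('a \<Rightarrow> 'a set) \<Rightarrow> ('a \<Rightarrow> 'a \<Rightarrow> 'v \<Rightarrow> 'v \<Rightarrow> real)
    \<Rightarrow> manner \<Rightarrow> real \<Rightarrow> scope \<Rightarrow> ('a \<Rightarrow> 'v) \<times> ('a, 'v) cmod \<Rightarrow> bool"
  for D N f mn \<gamma> sc where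
  init: "(\<forall>i. x i \<in> D i) \<Longrightarrow> dgls_reach D N f mn \<gamma> sc (x, \<lambda>i j a b. 0)"
| step: "dgls_reach D N f mn \<gamma> sc s \<Longrightarrow> dgls_step D N f mn \<gamma> sc s s'
         \<Longrightarrow> dgls_reach D N f mn \<gamma> sc s'"

end

theory Submission
  imports Defs
begin

text \<open>Every entry starts at 0 and is updated as \<open>m \<mapsto> \<gamma> m + c\<close> with an increment
  \<open>c \<le> 1\<close> (the row/column scopes add two ones but subtract one at their crossing).
  Since \<open>1 / (1 - \<gamma>)\<close> is the fixed point of \<open>m \<mapsto> \<gamma> m + 1\<close>, the bound is preserved
  by every round.\<close>

lemma incr_le_one: "incr sc pb pt di dj a b \<le> 1"
  by (cases sc) (auto simp: incr_def)

lemma evaporate_add_le_fixpoint: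
  fixes \<gamma> m c :: real
  assumes "0 \<le> \<gamma>" "\<gamma> < 1" "m \<le> 1 / (1 - \<gamma>)" "c \<le> 1"
  shows "\<gamma> * m + c \<le> 1 / (1 - \<gamma>)"
proof -
  have "\<gamma> * m + c \<le> \<gamma> * (1 / (1 - \<gamma>)) + 1"
    using mult_left_mono[OF assms(3,1)] assms(4) by linarith
  also have "\<dots> = 1 / (1 - \<gamma>)"
    using assms(2) by (simp add: field_simps)
  finally show ?thesis .
qed

lemma dgls_step_cmod_le:
  assumes "dgls_step D N f mn \<gamma> sc s s'" "0 \<le> \<gamma>" "\<gamma> < 1"
    and bound: "\<And>i j a b. snd s i j a b \<le> 1 / (1 - \<gamma>)"
  shows "snd s' i j a b \<le> 1 / (1 - \<gamma>)"
proof -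
  from assms(1) obtain V where update:
    "snd s' i j = (if j \<in> N i
       then (\<lambda>a b. \<gamma> * snd s i j a b + incr sc (V i j) (V j i) (fst s' i) (fst s j) a b)
       else snd s i j)"
    unfolding dgls_step_def Let_def by blast
  show ?thesis
  proof (cases "j \<in> N i")
    case True
    then show ?thesis
      using update evaporate_add_le_fixpoint[OF assms(2,3) bound incr_le_one] by simp
  next
    case False
    then show ?thesis using update bound by simp
  qed
qed

lemma dgls_reach_cmod_le:
  assumes "dgls_reach D N f mn \<gamma> sc s" "0 \<le> \<gamma>" "\<gamma> < 1"
  shows "snd s i j a b \<le> 1 / (1 - \<gamma>)"
  using assms(1) proof (induction arbitrary: i j a b rule: dgls_reach.induct)
  case (init x)
  then show ?case using assms(3) by simp
next
  case (step s s')
  then show ?case using dgls_step_cmod_le[OF step.hyps(2) assms(2,3)] by simp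
qed

theorem theorem1:
  fixes D :: "'a::finite \<Rightarrow> 'v set" and N :: "'a \<Rightarrow> 'a set"
    and f :: "'a \<Rightarrow> 'a \<Rightarrow> 'v \<Rightarrow> 'v \<Rightarrow> real"
    and mn :: manner and sc :: scope and \<gamma> :: real
    and x :: "'a \<Rightarrow> 'v" and M :: "('a, 'v) cmod"
  assumes "dcop D N f" and "0 < \<gamma>" and "\<gamma> < 1"
    and "dgls_reach D N f mn \<gamma> sc (x, M)"
    and "j \<in> N i" and "a \<in> D i" and "b \<in> D j"
  shows "M i j a b \<le> 1 / (1 - \<gamma>)"
  using dgls_reach_cmod_le[OF assms(4)] assms(2,3) by simp

end
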